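(* For $x\in(0,1)$, the functions $f(k)=\sin\left(\frac{\pi}{2}x^k\right)^{1/k}$, $g(k)=\tan\left(\frac{\pi}{2}x^k\right)^{1/k}$ and $h(k)=\sinh(x^k)^{1/k}$ are decreasing on $(0,\infty)$. In particular, for $k\ge1$, $$\sqrt[k]{\sin\left(\tfrac{\pi}{2}x^k\right)}\le\sin\left(\tfrac{\pi}{2}x\right)\le\sin\left(\tfrac{\pi}{2}\sqrt[k]{x}\right)^k,\qquad \sqrt[k]{\tan\left(\tfrac{\pi}{2}x^k\right)}\le\tan\left(\tfrac{\pi}{2}x\right)\le\tan\left(\tfrac{\pi}{2}\sqrt[k]{x}\right)^k,$$ $$\sqrt[k]{\sinh(x^k)}\le\sinh(x)\le\sinh(\sqrt[k]{x})^k.$$ *)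

theory Defs
  imports "HOL-Analysis.Analysis"
begin

end

theory Submission
  imports Defs
begin

text \<open>
  Each of the three functions is of the form \<open>k \<mapsto> F (x powr k) powr (1/k)\<close>, and it decreases
  in \<open>k\<close> as soon as \<open>F (y powr r) \<le> F y powr r\<close> for \<open>0 < y < 1\<close> and \<open>r \<ge> 1\<close>.
  For \<open>tan (pi/2 * y)\<close> and \<open>sinh y\<close> this follows from convexity with \<open>F 0 = 0\<close>, which gives
  \<open>F (t * b) \<le> t * F b\<close> for \<open>0 \<le> t \<le> 1\<close>, together with \<open>y \<le> F y\<close>.
  For \<open>sin (pi/2 * y)\<close> the same scaling inequality is applied in logarithmic coordinates:
  \<open>s \<mapsto> - ln (sin (pi/2 * exp s))\<close> is convex on \<open>s \<le> 0\<close> and vanishes at \<open>0\<close>, because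
  \<open>w / tan w\<close> decreases on \<open>(0, pi/2]\<close>.
\<close>

lemma convex_on_scale_le:
  fixes f :: "'a::real_vector \<Rightarrow> real"
  assumes "convex_on S f" "0 \<in> S" "b \<in> S" "f 0 = 0" "0 \<le> t" "t \<le> 1"
  shows "f (t *\<^sub>R b) \<le> t * f b"
  using convex_onD[OF assms(1) assms(5,6) assms(2,3)] assms(4) by simp

lemma convex_on_tan: "convex_on {0..<pi/2} tan"
proof (rule convex_on_realI[where f' = "\<lambda>x. inverse ((cos x)\<^sup>2)"])
  fix x :: real assume "x \<in> {0..<pi/2}"
  then have "cos x > 0" by (intro cos_gt_zero_pi) auto
  then show "(tan has_real_derivative inverse ((cos x)\<^sup>2)) (at x)" by simp
next
  fix x y :: real assume xy: "x \<in> {0..<pi/2}" "y \<in> {0..<pi/2}" "x \<le> y"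
  have cos_y: "cos y > 0" using xy by (intro cos_gt_zero_pi) auto
  have "cos y \<le> cos x" using xy by (intro cos_monotone_0_pi_le) auto
  then have "(cos y)\<^sup>2 \<le> (cos x)\<^sup>2" using cos_y by (intro power_mono) auto
  then show "inverse ((cos x)\<^sup>2) \<le> inverse ((cos y)\<^sup>2)"
    using cos_y by (intro le_imp_inverse_le) auto
qed simp

lemma convex_on_sinh: "convex_on {0..} (sinh :: real \<Rightarrow> real)"
proof (rule convex_on_realI[where f' = cosh])
  fix x :: real show "(sinh has_real_derivative cosh x) (at x)"
    by (auto intro!: derivative_eq_intros)
qed (auto simp: cosh_real_nonneg_le_iff)

lemma tan_ge_self: "0 \<le> x \<Longrightarrow> x < pi/2 \<Longrightarrow> x \<le> tan x"
  by (metis abs_of_nonneg abs_tan_ge tan_pos_pi2_le)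

lemma sinh_ge_self:
  fixes x :: real
  assumes "0 \<le> x"
  shows "x \<le> sinh x"
proof -
  have "(\<lambda>t. sinh t - t) 0 \<le> (\<lambda>t. sinh t - t) x"
  proof (rule DERIV_nonneg_imp_increasing_open[OF assms])
    fix t :: real
    have "DERIV (\<lambda>t. sinh t - t) t :> cosh t - 1"
      by (auto intro!: derivative_eq_intros)
    then show "\<exists>d. DERIV (\<lambda>t. sinh t - t) t :> d \<and> d \<ge> 0"
      using cosh_real_ge_1[of t] by force
  qed (intro continuous_intros)
  then show ?thesis by simp
qed

text \<open>Write \<open>c * y powr r\<close> as \<open>y powr (r - 1) *\<^sub>R (c * y)\<close> and scale, then use \<open>y \<le> f (c * y)\<close>.\<close>

lemma convex_on_powr_le:
  fixes f :: "real \<Rightarrow> real"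
  assumes convex: "convex_on S f" "0 \<in> S" "c * y \<in> S" "f 0 = 0"
    and y: "0 < y" "y \<le> 1" "y \<le> f (c * y)" and r: "1 \<le> r"
  shows "f (c * y powr r) \<le> f (c * y) powr r"
proof -
  have t: "0 \<le> y powr (r - 1)" "y powr (r - 1) \<le> 1"
    using y r powr_mono2[of "r - 1" y 1] by auto
  have split: "c * y powr r = y powr (r - 1) *\<^sub>R (c * y)"
    using y by (simp add: powr_diff)
  have "f (c * y powr r) \<le> y powr (r - 1) * f (c * y)"
    unfolding split by (rule convex_on_scale_le[OF convex t])
  also have "\<dots> \<le> f (c * y) powr (r - 1) * f (c * y)"
    using y r by (intro mult_right_mono powr_mono2) auto
  also have "\<dots> = f (c * y) powr r"
    using y by (simp add: powr_diff)
  finally show ?thesis .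
qed

lemma tan_half_pi_powr_le:
  fixes y r :: real
  assumes "0 < y" "y < 1" "1 \<le> r"
  shows "tan (pi/2 * y powr r) \<le> tan (pi/2 * y) powr r"
proof (rule convex_on_powr_le[OF convex_on_tan])
  have "y \<le> pi/2 * y" using assms pi_gt3 by simp
  also have "\<dots> \<le> tan (pi/2 * y)" using assms by (intro tan_ge_self) auto
  finally show "y \<le> tan (pi/2 * y)" .
qed (use assms in auto)

lemma sinh_powr_le:
  fixes y r :: real
  assumes "0 < y" "y \<le> 1" "1 \<le> r"
  shows "sinh (y powr r) \<le> sinh y powr r"
  using convex_on_powr_le[OF convex_on_sinh, of 1 y r] assms sinh_ge_self[of y] by simp

lemma tan_ratio_le:
  fixes a b :: real
  assumes "0 < a" "a \<le> b" "b < pi/2"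
  shows "b * tan a \<le> a * tan b"
proof -
  have "tan ((a / b) *\<^sub>R b) \<le> (a / b) * tan b"
    using assms by (intro convex_on_scale_le[OF convex_on_tan]) auto
  then show ?thesis using assms by (simp add: field_simps)
qed

text \<open>The derivative is \<open>- w / tan w\<close> with \<open>w = pi/2 * exp s\<close>; at \<open>w = pi/2\<close> this is still the
  correct value \<open>0\<close>, because \<open>tan (pi/2) = 0\<close> and \<open>x / 0 = 0\<close> in Isabelle.\<close>

lemma convex_on_neg_ln_sin_exp: "convex_on {..0} (\<lambda>s::real. - ln (sin (pi/2 * exp s)))"
proof (rule convex_on_realI[where f' = "\<lambda>s. - (pi/2 * exp s / tan (pi/2 * exp s))"])
  fix s :: real assume "s \<in> {..0}"
  define w where "w = pi/2 * exp s"
  have "0 < w" "w \<le> pi/2" using \<open>s \<in> {..0}\<close> by (auto simp: w_def)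
  then have sin_w: "sin w > 0" by (intro sin_gt_zero) auto
  have "((\<lambda>s. - ln (sin (pi/2 * exp s))) has_real_derivative
          - (cos w * (pi/2 * exp s) / sin w)) (at s)"
    using sin_w unfolding w_def by (auto intro!: derivative_eq_intros simp: field_simps)
  moreover have "cos w * (pi/2 * exp s) / sin w = w / tan w"
    using sin_w by (cases "cos w = 0") (auto simp: tan_def w_def field_simps)
  ultimately show "((\<lambda>s. - ln (sin (pi/2 * exp s))) has_real_derivative
          - (pi/2 * exp s / tan (pi/2 * exp s))) (at s)" by (simp add: w_def)
next
  fix s t :: real assume "s \<in> {..0}" "t \<in> {..0}" "s \<le> t"
  define a b where "a = pi/2 * exp s" and "b = pi/2 * exp t"
  have ab: "0 < a" "a \<le> b" "b \<le> pi/2"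
    using \<open>s \<in> {..0}\<close> \<open>t \<in> {..0}\<close> \<open>s \<le> t\<close> by (auto simp: a_def b_def)
  have "b / tan b \<le> a / tan a"
  proof (cases "b = pi/2")
    case True
    have "tan b = 0" unfolding True by simp
    moreover have "0 \<le> tan a"
    proof (cases "a < pi/2")
      case False
      then have "a = pi/2" using ab True by simp
      then show ?thesis unfolding \<open>a = pi/2\<close> by simp
    qed (use ab tan_pos_pi2_le in auto)
    ultimately show ?thesis using ab by simp
  next
    case False
    then have "b < pi/2" using ab by simp
    then have "0 < tan a" "0 < tan b" using ab by (auto intro!: tan_gt_zero)
    then show ?thesis
      using tan_ratio_le[OF ab(1,2) \<open>b < pi/2\<close>] ab by (simp add: field_simps)
  qed
  then show "- (a / tan a) \<le> - (b / tan b)" by simp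
qed simp

lemma sin_half_pi_powr_le:
  fixes y r :: real
  assumes y: "0 < y" "y \<le> 1" and r: "1 \<le> r"
  shows "sin (pi/2 * y powr r) \<le> sin (pi/2 * y) powr r"
proof -
  have sin_pos: "0 < sin (pi/2 * z)" if "0 < z" "z \<le> 1" for z :: real
    using that by (intro sin_gt_zero) auto
  have "r * ln y \<le> 0" using y r by (simp add: mult_nonneg_nonpos)
  then have "- ln (sin (pi/2 * exp ((1 / r) *\<^sub>R (r * ln y))))
      \<le> (1 / r) * - ln (sin (pi/2 * exp (r * ln y)))"
    using r by (intro convex_on_scale_le[OF convex_on_neg_ln_sin_exp]) auto
  then have "ln (sin (pi/2 * y powr r)) \<le> r * ln (sin (pi/2 * y))"
    using y r by (simp add: powr_def field_simps)
  also have "\<dots> = ln (sin (pi/2 * y) powr r)"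
    using sin_pos[OF y] by (simp add: ln_powr)
  finally show ?thesis
    using y r sin_pos[OF y] sin_pos[of "y powr r"] powr_le_one_le[of y r]
    by (subst (asm) ln_le_cancel_iff) auto
qed

lemma antimono_on_comp_powr_root:
  fixes F :: "real \<Rightarrow> real"
  assumes powr_le: "\<And>y r. 0 < y \<Longrightarrow> y < 1 \<Longrightarrow> 1 \<le> r \<Longrightarrow> F (y powr r) \<le> F y powr r"
    and pos: "\<And>y. 0 < y \<Longrightarrow> y < 1 \<Longrightarrow> 0 < F y"
    and x: "0 < x" "x < 1"
  shows "antimono_on {0<..} (\<lambda>k. F (x powr k) powr (1 / k))"
proof (rule monotone_onI)
  fix j k :: real assume "j \<in> {0<..}" "j \<le> k"
  then have jk: "0 < j" "0 < k" "1 \<le> k / j" by auto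
  define y where "y = x powr j"
  have y: "0 < y" "y < 1" using x jk powr_less_mono2[of j x 1] by (auto simp: y_def)
  have y_powr: "y powr (k / j) = x powr k" using jk by (simp add: y_def powr_powr)
  have "F (x powr k) powr (1 / k) \<le> (F y powr (k / j)) powr (1 / k)"
    using powr_le[OF y jk(3)] pos[of "x powr k"] x jk(2) powr_less_mono2[of k x 1]
    by (intro powr_mono2) (auto simp: y_powr)
  also have "\<dots> = F (x powr j) powr (1 / j)" using jk by (simp add: powr_powr y_def)
  finally show "F (x powr k) powr (1 / k) \<le> F (x powr j) powr (1 / j)" .
qed

lemma comp_powr_root_bounds:
  fixes F :: "real \<Rightarrow> real"
  assumes powr_le: "\<And>y r. 0 < y \<Longrightarrow> y < 1 \<Longrightarrow> 1 \<le> r \<Longrightarrow> F (y powr r) \<le> F y powr r"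
    and pos: "\<And>y. 0 < y \<Longrightarrow> y < 1 \<Longrightarrow> 0 < F y"
    and x: "0 < x" "x < 1" and k: "1 \<le> k"
  shows "F (x powr k) powr (1 / k) \<le> F x \<and> F x \<le> F (x powr (1 / k)) powr k"
proof
  show "F (x powr k) powr (1 / k) \<le> F x"
    using monotone_onD[OF antimono_on_comp_powr_root[OF powr_le pos x], of 1 k] k x pos[OF x]
    by simp
  have "0 < x powr (1 / k)" "x powr (1 / k) < 1"
    using x k powr_less_mono2[of "1 / k" x 1] by auto
  from powr_le[OF this k] show "F x \<le> F (x powr (1 / k)) powr k"
    using x k by (simp add: powr_powr)
qed

theorem lemma4p10:
  fixes x :: real
  assumes "0 < x" and "x < 1"
  shows "antimono_on {0<..} (\<lambda>k::real. sin (pi / 2 * x powr k) powr (1 / k))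
       \<and> antimono_on {0<..} (\<lambda>k::real. tan (pi / 2 * x powr k) powr (1 / k))
       \<and> antimono_on {0<..} (\<lambda>k::real. sinh (x powr k) powr (1 / k))
       \<and> (\<forall>k::real. k \<ge> 1 \<longrightarrow>
            sin (pi / 2 * x powr k) powr (1 / k) \<le> sin (pi / 2 * x)
          \<and> sin (pi / 2 * x) \<le> sin (pi / 2 * x powr (1 / k)) powr k
          \<and> tan (pi / 2 * x powr k) powr (1 / k) \<le> tan (pi / 2 * x)
          \<and> tan (pi / 2 * x) \<le> tan (pi / 2 * x powr (1 / k)) powr k
          \<and> sinh (x powr k) powr (1 / k) \<le> sinh x
          \<and> sinh x \<le> sinh (x powr (1 / k)) powr k)"
proof -
  have sin_pos: "0 < sin (pi / 2 * y)" and tan_pos: "0 < tan (pi / 2 * y)"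
    if "0 < y" "y < 1" for y :: real
    using that by (auto intro!: sin_gt_zero tan_gt_zero)
  note sin = sin_half_pi_powr_le[OF _ less_imp_le] sin_pos
  note tan = tan_half_pi_powr_le tan_pos
  note sinh = sinh_powr_le[OF _ less_imp_le] sinh_real_pos_iff[THEN iffD2]
  show ?thesis
    using antimono_on_comp_powr_root[OF sin assms] comp_powr_root_bounds[OF sin assms]
      antimono_on_comp_powr_root[OF tan assms] comp_powr_root_bounds[OF tan assms]
      antimono_on_comp_powr_root[OF sinh assms] comp_powr_root_bounds[OF sinh assms]
    by blast
qed

end
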